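(* All the rules of each calculus of the family $\mathsf{CL}^*$ are height-preserving invertible: if the conclusion of a rule instance is derivable with height at most $n$, then each of its premisses is derivable with height at most $n$.
   Context: Height of a derivation = number of nodes on its longest branch minus one. Syntax: world labels $x,y,z,\dots$; neighbourhood labels $a,b,c,\dots$, including $\{x\}$ for each world label $x$. Relational atoms: $a\in N(x)$, $x\in a$, $a\subseteq b$. Labelled formulas: relational atoms, $x:A$, $a\Vdash^{\exists}A$, $a\Vdash^{\forall}A$, $x\Vdash_aA|B$ for formulas of $\mathcal{L}::=p\mid\bot\mid A\wedge B\mid A\lor B\mid A\to B\mid A>B$. Sequents $\Gamma\Rightarrow\Delta$: multisets, relational atoms only in $\Gamma$. Rules of $\mathsf{CL}$ ("(u!)": $u$ not in conclusion; notation premisses / conclusion): initial sequents $x:p,\Gamma\Rightarrow\Delta,x:p$ ($p$ atomic), $x:\bot,\Gamma\Rightarrow\Delta$; G3 rules for $\wedge,\vee,\to$ on $x:A$; L$\forall$: $x:A,x\in a,a\Vdash^\forall A,\Gamma\Rightarrow\Delta$ / $x\in a,a\Vdash^\forall A,\Gamma\Rightarrow\Delta$; R$\forall$(x!): $x\in a,\Gamma\Rightarrow\Delta,x:A$ / $\Gamma\Rightarrow\Delta,a\Vdash^\forall A$; L$\exists$(x!): $x\in a,x:A,\Gamma\Rightarrow\Delta$ / $a\Vdash^\exists A,\Gamma\Rightarrow\Delta$; R$\exists$: $x\in a,\Gamma\Rightarrow\Delta,x:A,a\Vdash^\exists A$ / $x\in a,\Gamma\Rightarrow\Delta,a\Vdash^\exists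 A$; R$>$(a!): $a\in N(x),a\Vdash^\exists A,\Gamma\Rightarrow\Delta,x\Vdash_aA|B$ / $\Gamma\Rightarrow\Delta,x:A>B$; L$>$: $a\in N(x),x:A>B,\Gamma\Rightarrow\Delta,a\Vdash^\exists A$ and $x\Vdash_aA|B,a\in N(x),x:A>B,\Gamma\Rightarrow\Delta$ / $a\in N(x),x:A>B,\Gamma\Rightarrow\Delta$; R$|$: $c\in N(x),c\subseteq a,\Gamma\Rightarrow\Delta,x\Vdash_aA|B,c\Vdash^\exists A$ and $c\in N(x),c\subseteq a,\Gamma\Rightarrow\Delta,x\Vdash_aA|B,c\Vdash^\forall A\to B$ / $c\in N(x),c\subseteq a,\Gamma\Rightarrow\Delta,x\Vdash_aA|B$; L$|$(c!): $c\in N(x),c\subseteq a,c\Vdash^\exists A,c\Vdash^\forall A\to B,\Gamma\Rightarrow\Delta$ / $x\Vdash_aA|B,\Gamma\Rightarrow\Delta$; Ref: $a\subseteq a,\Gamma\Rightarrow\Delta$ / $\Gamma\Rightarrow\Delta$; Tr: $c\subseteq a,c\subseteq b,b\subseteq a,\Gamma\Rightarrow\Delta$ / $c\subseteq b,b\subseteq a,\Gamma\Rightarrow\Delta$; L$\subseteq$: $x\in a,a\subseteq b,x\in b,\Gamma\Rightarrow\Delta$ / $x\in a,a\subseteq b,\Gamma\Rightarrow\Delta$. Extension rules: N(a!): $a\in N(x),\Gamma\Rightarrow\Delta$ / $\Gamma\Rightarrow\Delta$; 0(y!): $y\in a,a\in N(x),\Gamma\Rightarrow\Delta$ / $a\in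 N(x),\Gamma\Rightarrow\Delta$; T(a!): $x\in a,a\in N(x),\Gamma\Rightarrow\Delta$ / $\Gamma\Rightarrow\Delta$; W: $x\in a,a\in N(x),\Gamma\Rightarrow\Delta$ / $a\in N(x),\Gamma\Rightarrow\Delta$; Single: $x\in\{x\},\{x\}\in N(x),\Gamma\Rightarrow\Delta$ / $\{x\}\in N(x),\Gamma\Rightarrow\Delta$; C: $\{x\}\in N(x),\{x\}\subseteq a,a\in N(x),\Gamma\Rightarrow\Delta$ / $a\in N(x),\Gamma\Rightarrow\Delta$; Repl$_1$: $y\in\{x\},At(x),At(y),\Gamma\Rightarrow\Delta$ / $y\in\{x\},At(x),\Gamma\Rightarrow\Delta$; Repl$_2$: same premiss / $y\in\{x\},At(y),\Gamma\Rightarrow\Delta$, with $At(x)$ among $x:P$ ($P$ atomic), $x\in a$, $a\in N(x)$, $x\in\{z\}$; U$_1$(c!): $z\in c,c\in N(x),a\in N(x),y\in a,b\in N(y),z\in b,\Gamma\Rightarrow\Delta$ / $a\in N(x),y\in a,b\in N(y),z\in b,\Gamma\Rightarrow\Delta$; U$_2$(c!): $z\in c,c\in N(y),a\in N(x),y\in a,b\in N(x),z\in b,\Gamma\Rightarrow\Delta$ / $a\in N(x),y\in a,b\in N(x),z\in b,\Gamma\Rightarrow\Delta$; A$_1$: $b\in N(y),a\in N(x),y\in a,b\in N(x),\Gamma\Rightarrow\Delta$ / $a\in N(x),y\in a,b\in N(x),\Gamma\Rightarrow\Delta$; A$_2$: $b\in N(x),a\in N(x),y\in a,b\in N(y),\Gamma\Rightarrow\Delta$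 / $a\in N(x),y\in a,b\in N(y),\Gamma\Rightarrow\Delta$; plus contracted instances of U$_1$,U$_2$,A$_1$. Family $\mathsf{CL}^*$: $\mathsf{CL}$; $\mathsf{CL}^N=\mathsf{CL}+$N,0; $\mathsf{CL}^T=\mathsf{CL}^N+$T; $\mathsf{CL}^W=\mathsf{CL}^T+$W; $\mathsf{CL}^C=\mathsf{CL}^W+$C,Single,Repl$_1$,Repl$_2$; $\mathsf{CL}^U=\mathsf{CL}+$U$_1$,U$_2$; $\mathsf{CL}^{NU},\dots,\mathsf{CL}^{CU}$ = $\mathsf{CL}^N,\dots,\mathsf{CL}^C$ + U$_1$,U$_2$; $\mathsf{CL}^A=\mathsf{CL}+$A$_1$,A$_2$; $\mathsf{CL}^{NA},\dots,\mathsf{CL}^{CA}$ = $\mathsf{CL}^N,\dots,\mathsf{CL}^C$ + A$_1$,A$_2$. *)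

theory Defs
  imports Main "HOL-Library.Multiset"
begin

text \<open>Formulas of the language L (atoms of type 'p; A > B is the conditional).\<close>
datatype 'p fm = Atom 'p | Bot | And "'p fm" "'p fm" | Or "'p fm" "'p fm"
  | Imp "'p fm" "'p fm" | Cond "'p fm" "'p fm"

text \<open>World labels are natural numbers. Neighbourhood labels are either
  variable labels NL k or singleton labels Sing x, i.e. {x}.\<close>
datatype nbh = NL nat | Sing nat

text \<open>Labelled formulas:
  InN a x = a in N(x);  Mem x a = x in a;  Sub a b = a subseteq b;
  Lab x A = x:A;  Ex a A = a forces-exists A;  All a A = a forces-forall A;
  Cnd x a A B = x forces_a A|B.\<close>
datatype 'p lf = InN nbh nat | Mem nat nbh | Sub nbh nbh
  | Lab nat "'p fm" | Ex nbh "'p fm" | All nbh "'p fm" | Cnd nat nbh "'p fm" "'p fm"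

type_synonym 'p seq = "'p lf multiset \<times> 'p lf multiset"

fun is_rel :: "'p lf \<Rightarrow> bool" where
  "is_rel (InN a x) = True"
| "is_rel (Mem x a) = True"
| "is_rel (Sub a b) = True"
| "is_rel _ = False"

definition wf_seq :: "'p seq \<Rightarrow> bool" where
  "wf_seq S \<longleftrightarrow> (\<forall>\<phi>\<in>#snd S. \<not> is_rel \<phi>)"

fun nb_worlds :: "nbh \<Rightarrow> nat set" where
  "nb_worlds (NL k) = {}"
| "nb_worlds (Sing x) = {x}"

fun nb_vars :: "nbh \<Rightarrow> nat set" where
  "nb_vars (NL k) = {k}"
| "nb_vars (Sing x) = {}"

fun lf_worlds :: "'p lf \<Rightarrow> nat set" where
  "lf_worlds (InN a x) = insert x (nb_worlds a)"
| "lf_worlds (Mem x a) = insert x (nb_worlds a)"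
| "lf_worlds (Sub a b) = nb_worlds a \<union> nb_worlds b"
| "lf_worlds (Lab x A) = {x}"
| "lf_worlds (Ex a A) = nb_worlds a"
| "lf_worlds (All a A) = nb_worlds a"
| "lf_worlds (Cnd x a A B) = insert x (nb_worlds a)"

fun lf_nvars :: "'p lf \<Rightarrow> nat set" where
  "lf_nvars (InN a x) = nb_vars a"
| "lf_nvars (Mem x a) = nb_vars a"
| "lf_nvars (Sub a b) = nb_vars a \<union> nb_vars b"
| "lf_nvars (Lab x A) = {}"
| "lf_nvars (Ex a A) = nb_vars a"
| "lf_nvars (All a A) = nb_vars a"
| "lf_nvars (Cnd x a A B) = nb_vars a"

definition seq_worlds :: "'p seq \<Rightarrow> nat set" where
  "seq_worlds S = (\<Union>\<phi>\<in>set_mset (fst S) \<union> set_mset (snd S). lf_worlds \<phi>)"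

definition seq_nvars :: "'p seq \<Rightarrow> nat set" where
  "seq_nvars S = (\<Union>\<phi>\<in>set_mset (fst S) \<union> set_mset (snd S). lf_nvars \<phi>)"

text \<open>Shapes of the atoms At(x) in the replacement rules:
  x:P (P atomic), x in a (including x in {z}), a in N(x).\<close>
datatype 'p atshape = AtP 'p | AtMem nbh | AtNb nbh

fun atx :: "'p atshape \<Rightarrow> nat \<Rightarrow> 'p lf" where
  "atx (AtP p) x = Lab x (Atom p)"
| "atx (AtMem a) x = Mem x a"
| "atx (AtNb a) x = InN a x"

datatype rname = LAnd | RAnd | LOr | ROr | LImp | RImp
  | LAll | RAll | LEx | REx | RCond | LCond | RBar | LBar
  | Ref | Tr | LSub
  | RuleN | Rule0 | RuleT | RuleW | Single | RuleC | Repl1 | Repl2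
  | U1 | U2 | A1 | A2

text \<open>Contracted instances: the list of principal relational atoms may have
  repetitions (arising from identified labels) contracted.\<close>
definition contr :: "'a list \<Rightarrow> 'a list \<Rightarrow> bool" where
  "contr ps' ps \<longleftrightarrow> mset ps' \<subseteq># mset ps \<and> set ps' = set ps"

inductive rinst :: "rname \<Rightarrow> 'p seq list \<Rightarrow> 'p seq \<Rightarrow> bool" where
  "rinst LAnd [({#Lab x A, Lab x B#} + G, D)] ({#Lab x (And A B)#} + G, D)"
| "rinst RAnd [(G, D + {#Lab x A#}), (G, D + {#Lab x B#})] (G, D + {#Lab x (And A B)#})"
| "rinst LOr [({#Lab x A#} + G, D), ({#Lab x B#} + G, D)] ({#Lab x (Or A B)#} + G, D)"
| "rinst ROr [(G, D + {#Lab x A, Lab x B#})] (G, D + {#Lab x (Or A B)#})"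
| "rinst LImp [(G, D + {#Lab x A#}), ({#Lab x B#} + G, D)] ({#Lab x (Imp A B)#} + G, D)"
| "rinst RImp [({#Lab x A#} + G, D + {#Lab x B#})] (G, D + {#Lab x (Imp A B)#})"
| "rinst LAll [({#Lab x A, Mem x a, All a A#} + G, D)] ({#Mem x a, All a A#} + G, D)"
| "x \<notin> seq_worlds (G, D + {#All a A#}) \<Longrightarrow>
   rinst RAll [({#Mem x a#} + G, D + {#Lab x A#})] (G, D + {#All a A#})"
| "x \<notin> seq_worlds ({#Ex a A#} + G, D) \<Longrightarrow>
   rinst LEx [({#Mem x a, Lab x A#} + G, D)] ({#Ex a A#} + G, D)"
| "rinst REx [({#Mem x a#} + G, D + {#Lab x A, Ex a A#})] ({#Mem x a#} + G, D + {#Ex a A#})"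
| "k \<notin> seq_nvars (G, D + {#Lab x (Cond A B)#}) \<Longrightarrow>
   rinst RCond [({#InN (NL k) x, Ex (NL k) A#} + G, D + {#Cnd x (NL k) A B#})]
               (G, D + {#Lab x (Cond A B)#})"
| "rinst LCond [({#InN a x, Lab x (Cond A B)#} + G, D + {#Ex a A#}),
                ({#Cnd x a A B, InN a x, Lab x (Cond A B)#} + G, D)]
               ({#InN a x, Lab x (Cond A B)#} + G, D)"
| "rinst RBar [({#InN c x, Sub c a#} + G, D + {#Cnd x a A B, Ex c A#}),
               ({#InN c x, Sub c a#} + G, D + {#Cnd x a A B, All c (Imp A B)#})]
              ({#InN c x, Sub c a#} + G, D + {#Cnd x a A B#})"
| "k \<notin> seq_nvars ({#Cnd x a A B#} + G, D) \<Longrightarrow>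
   rinst LBar [({#InN (NL k) x, Sub (NL k) a, Ex (NL k) A, All (NL k) (Imp A B)#} + G, D)]
              ({#Cnd x a A B#} + G, D)"
| "rinst Ref [({#Sub a a#} + G, D)] (G, D)"
| "rinst Tr [({#Sub c a, Sub c b, Sub b a#} + G, D)] ({#Sub c b, Sub b a#} + G, D)"
| "rinst LSub [({#Mem x a, Sub a b, Mem x b#} + G, D)] ({#Mem x a, Sub a b#} + G, D)"
| "k \<notin> seq_nvars (G, D) \<Longrightarrow>
   rinst RuleN [({#InN (NL k) x#} + G, D)] (G, D)"
| "y \<notin> seq_worlds ({#InN a x#} + G, D) \<Longrightarrow>
   rinst Rule0 [({#Mem y a, InN a x#} + G, D)] ({#InN a x#} + G, D)"
| "k \<notin> seq_nvars (G, D) \<Longrightarrow>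
   rinst RuleT [({#Mem x (NL k), InN (NL k) x#} + G, D)] (G, D)"
| "rinst RuleW [({#Mem x a, InN a x#} + G, D)] ({#InN a x#} + G, D)"
| "rinst Single [({#Mem x (Sing x), InN (Sing x) x#} + G, D)] ({#InN (Sing x) x#} + G, D)"
| "rinst RuleC [({#InN (Sing x) x, Sub (Sing x) a, InN a x#} + G, D)] ({#InN a x#} + G, D)"
| "rinst Repl1 [({#Mem y (Sing x), atx s x, atx s y#} + G, D)] ({#Mem y (Sing x), atx s x#} + G, D)"
| "rinst Repl2 [({#Mem y (Sing x), atx s x, atx s y#} + G, D)] ({#Mem y (Sing x), atx s y#} + G, D)"
| "contr ps [InN a x, Mem y a, InN b y, Mem z b] \<Longrightarrow> k \<notin> seq_nvars (mset ps + G, D) \<Longrightarrow>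
   rinst U1 [({#Mem z (NL k), InN (NL k) x#} + mset ps + G, D)] (mset ps + G, D)"
| "contr ps [InN a x, Mem y a, InN b x, Mem z b] \<Longrightarrow> k \<notin> seq_nvars (mset ps + G, D) \<Longrightarrow>
   rinst U2 [({#Mem z (NL k), InN (NL k) y#} + mset ps + G, D)] (mset ps + G, D)"
| "contr ps [InN a x, Mem y a, InN b x] \<Longrightarrow>
   rinst A1 [({#InN b y#} + mset ps + G, D)] (mset ps + G, D)"
| "rinst A2 [({#InN b x, InN a x, Mem y a, InN b y#} + G, D)] ({#InN a x, Mem y a, InN b y#} + G, D)"

inductive initial :: "'p seq \<Rightarrow> bool" where
  "initial ({#Lab x (Atom p)#} + G, D + {#Lab x (Atom p)#})"
| "initial ({#Lab x Bot#} + G, D)"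

datatype base = CLb | Nb | Tb | Wb | Cb
datatype ext = NoExt | UExt | AExt
type_synonym calc = "base \<times> ext"

definition core_rules :: "rname set" where
  "core_rules = {LAnd, RAnd, LOr, ROr, LImp, RImp, LAll, RAll, LEx, REx,
                 RCond, LCond, RBar, LBar, Ref, Tr, LSub}"

fun base_rules :: "base \<Rightarrow> rname set" where
  "base_rules CLb = {}"
| "base_rules Nb = {RuleN, Rule0}"
| "base_rules Tb = {RuleN, Rule0, RuleT}"
| "base_rules Wb = {RuleN, Rule0, RuleT, RuleW}"
| "base_rules Cb = {RuleN, Rule0, RuleT, RuleW, RuleC, Single, Repl1, Repl2}"

fun ext_rules :: "ext \<Rightarrow> rname set" where
  "ext_rules NoExt = {}"
| "ext_rules UExt = {U1, U2}"
| "ext_rules AExt = {A1, A2}"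

definition rules :: "calc \<Rightarrow> rname set" where
  "rules L = core_rules \<union> base_rules (fst L) \<union> ext_rules (snd L)"

text \<open>derivable L n S: S has a derivation in calculus L of height at most n
  (height = number of nodes on the longest branch minus one).\<close>
inductive derivable :: "calc \<Rightarrow> nat \<Rightarrow> 'p seq \<Rightarrow> bool" where
  init: "initial S \<Longrightarrow> derivable L n S"
| step: "R \<in> rules L \<Longrightarrow> rinst R ps S \<Longrightarrow> (\<forall>P\<in>set ps. derivable L n P) \<Longrightarrow>
         derivable L (Suc n) S"

end

theory Submission
  imports Defs "HOL-Library.Product_Plus" "HOL-Combinatorics.Transposition"
begin

(* Two height-preserving admissibility results do the work. Injective relabelling of world and
   neighbourhood labels maps derivations to derivations of the same height; with it, weakening is
   height-preserving, because the eigenlabels of the last rule can be renamed away from the added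
   formulas before the rule is reapplied. The relational rules, L-forall, R-exists, L> and R| repeat
   their conclusion in every premiss, so their invertibility is weakening. For the remaining
   logical rules argue by induction on the height: if the formula to be inverted is not principal
   in the last step, invert the premisses and reapply the step; if it is principal, one premiss is
   already the required sequent, up to trading its eigenlabel for the one the inverted instance
   uses. *)

section \<open>Labels and relabelling\<close>

lemma seq_worlds_Pair [simp]:
  "seq_worlds (G, D) = (\<Union>\<phi>\<in>set_mset G. lf_worlds \<phi>) \<union> (\<Union>\<phi>\<in>set_mset D. lf_worlds \<phi>)"
  by (auto simp: seq_worlds_def)

lemma seq_nvars_Pair [simp]:
  "seq_nvars (G, D) = (\<Union>\<phi>\<in>set_mset G. lf_nvars \<phi>) \<union> (\<Union>\<phi>\<in>set_mset D. lf_nvars \<phi>)"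
  by (auto simp: seq_nvars_def)

lemma seq_worlds_add [simp]: "seq_worlds (S + W) = seq_worlds S \<union> seq_worlds W"
  by (auto simp: seq_worlds_def)

lemma seq_nvars_add [simp]: "seq_nvars (S + W) = seq_nvars S \<union> seq_nvars W"
  by (auto simp: seq_nvars_def)

lemma finite_seq_worlds: "finite (seq_worlds S)"
proof -
  have "finite (nb_worlds a)" for a by (cases a) auto
  then have "finite (lf_worlds \<phi>)" for \<phi> :: "'p lf" by (cases \<phi>) auto
  then show ?thesis by (auto simp: seq_worlds_def)
qed

lemma finite_seq_nvars: "finite (seq_nvars S)"
proof -
  have "finite (nb_vars a)" for a by (cases a) auto
  then have "finite (lf_nvars \<phi>)" for \<phi> :: "'p lf" by (cases \<phi>) auto
  then show ?thesis by (auto simp: seq_nvars_def)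
qed

fun rename_nbh :: "(nat \<Rightarrow> nat) \<Rightarrow> (nat \<Rightarrow> nat) \<Rightarrow> nbh \<Rightarrow> nbh" where
  "rename_nbh f g (NL k) = NL (g k)"
| "rename_nbh f g (Sing x) = Sing (f x)"

fun rename_lf :: "(nat \<Rightarrow> nat) \<Rightarrow> (nat \<Rightarrow> nat) \<Rightarrow> 'p lf \<Rightarrow> 'p lf" where
  "rename_lf f g (InN a x) = InN (rename_nbh f g a) (f x)"
| "rename_lf f g (Mem x a) = Mem (f x) (rename_nbh f g a)"
| "rename_lf f g (Sub a b) = Sub (rename_nbh f g a) (rename_nbh f g b)"
| "rename_lf f g (Lab x A) = Lab (f x) A"
| "rename_lf f g (Ex a A) = Ex (rename_nbh f g a) A"
| "rename_lf f g (All a A) = All (rename_nbh f g a) A"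
| "rename_lf f g (Cnd x a A B) = Cnd (f x) (rename_nbh f g a) A B"

definition rename_seq :: "(nat \<Rightarrow> nat) \<Rightarrow> (nat \<Rightarrow> nat) \<Rightarrow> 'p seq \<Rightarrow> 'p seq" where
  "rename_seq f g S = (image_mset (rename_lf f g) (fst S), image_mset (rename_lf f g) (snd S))"

fun rename_atshape :: "(nat \<Rightarrow> nat) \<Rightarrow> (nat \<Rightarrow> nat) \<Rightarrow> 'p atshape \<Rightarrow> 'p atshape" where
  "rename_atshape f g (AtP p) = AtP p"
| "rename_atshape f g (AtMem a) = AtMem (rename_nbh f g a)"
| "rename_atshape f g (AtNb a) = AtNb (rename_nbh f g a)"

lemma rename_lf_atx [simp]: "rename_lf f g (atx s x) = atx (rename_atshape f g s) (f x)"
  by (cases s) auto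

lemma nb_worlds_rename [simp]: "nb_worlds (rename_nbh f g a) = f ` nb_worlds a"
  by (cases a) auto

lemma lf_worlds_rename [simp]: "lf_worlds (rename_lf f g \<phi>) = f ` lf_worlds \<phi>"
  by (cases \<phi>) auto

lemma nb_vars_rename [simp]: "nb_vars (rename_nbh f g a) = g ` nb_vars a"
  by (cases a) auto

lemma lf_nvars_rename [simp]: "lf_nvars (rename_lf f g \<phi>) = g ` lf_nvars \<phi>"
  by (cases \<phi>) auto

lemma seq_worlds_rename [simp]: "seq_worlds (rename_seq f g S) = f ` seq_worlds S"
  by (auto simp: seq_worlds_def rename_seq_def)

lemma seq_nvars_rename [simp]: "seq_nvars (rename_seq f g S) = g ` seq_nvars S"
  by (auto simp: seq_nvars_def rename_seq_def)

lemma rename_seq_add [simp]: "rename_seq f g (S + W) = rename_seq f g S + rename_seq f g W"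
  by (simp add: rename_seq_def)

lemma rename_nbh_ident:
  "\<forall>x\<in>nb_worlds a. f x = x \<Longrightarrow> \<forall>k\<in>nb_vars a. g k = k \<Longrightarrow> rename_nbh f g a = a"
  by (cases a) auto

lemma rename_lf_ident:
  "\<forall>x\<in>lf_worlds \<phi>. f x = x \<Longrightarrow> \<forall>k\<in>lf_nvars \<phi>. g k = k \<Longrightarrow> rename_lf f g \<phi> = \<phi>"
  by (cases \<phi>) (auto simp: rename_nbh_ident)

lemma rename_seq_ident:
  assumes "\<forall>x\<in>seq_worlds S. f x = x" and "\<forall>k\<in>seq_nvars S. g k = k"
  shows "rename_seq f g S = S"
  using assms unfolding rename_seq_def seq_worlds_def seq_nvars_def
  by (auto simp: prod_eq_iff intro!: multiset.map_ident_strong rename_lf_ident)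

lemma rename_seq_id [simp]: "rename_seq id id S = S"
  by (rule rename_seq_ident) auto

lemma contr_map: "contr ps l \<Longrightarrow> contr (map h ps) (map h l)"
  unfolding contr_def by (auto intro: image_mset_subseteq_mono)

section \<open>Rule instances without context\<close>

(* active_inst R Ps C Ew Ev: an instance of R with empty context, with eigen world labels Ew and
   eigen neighbourhood labels Ev; an instance of rinst is one of these extended by a context in
   which Ew and Ev are fresh. *)
inductive active_inst :: "rname \<Rightarrow> 'p seq list \<Rightarrow> 'p seq \<Rightarrow> nat set \<Rightarrow> nat set \<Rightarrow> bool" where
  "active_inst LAnd [({#Lab x A, Lab x B#}, {#})] ({#Lab x (And A B)#}, {#}) {} {}"
| "active_inst RAnd [({#}, {#Lab x A#}), ({#}, {#Lab x B#})] ({#}, {#Lab x (And A B)#}) {} {}"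
| "active_inst LOr [({#Lab x A#}, {#}), ({#Lab x B#}, {#})] ({#Lab x (Or A B)#}, {#}) {} {}"
| "active_inst ROr [({#}, {#Lab x A, Lab x B#})] ({#}, {#Lab x (Or A B)#}) {} {}"
| "active_inst LImp [({#}, {#Lab x A#}), ({#Lab x B#}, {#})] ({#Lab x (Imp A B)#}, {#}) {} {}"
| "active_inst RImp [({#Lab x A#}, {#Lab x B#})] ({#}, {#Lab x (Imp A B)#}) {} {}"
| "active_inst LAll [({#Lab x A, Mem x a, All a A#}, {#})] ({#Mem x a, All a A#}, {#}) {} {}"
| "x \<notin> nb_worlds a \<Longrightarrow>
   active_inst RAll [({#Mem x a#}, {#Lab x A#})] ({#}, {#All a A#}) {x} {}"
| "x \<notin> nb_worlds a \<Longrightarrow>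
   active_inst LEx [({#Mem x a, Lab x A#}, {#})] ({#Ex a A#}, {#}) {x} {}"
| "active_inst REx [({#Mem x a#}, {#Lab x A, Ex a A#})] ({#Mem x a#}, {#Ex a A#}) {} {}"
| "active_inst RCond [({#InN (NL k) x, Ex (NL k) A#}, {#Cnd x (NL k) A B#})]
     ({#}, {#Lab x (Cond A B)#}) {} {k}"
| "active_inst LCond [({#InN a x, Lab x (Cond A B)#}, {#Ex a A#}),
                      ({#Cnd x a A B, InN a x, Lab x (Cond A B)#}, {#})]
     ({#InN a x, Lab x (Cond A B)#}, {#}) {} {}"
| "active_inst RBar [({#InN c x, Sub c a#}, {#Cnd x a A B, Ex c A#}),
                     ({#InN c x, Sub c a#}, {#Cnd x a A B, All c (Imp A B)#})]
     ({#InN c x, Sub c a#}, {#Cnd x a A B#}) {} {}"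
| "k \<notin> nb_vars a \<Longrightarrow>
   active_inst LBar [({#InN (NL k) x, Sub (NL k) a, Ex (NL k) A, All (NL k) (Imp A B)#}, {#})]
     ({#Cnd x a A B#}, {#}) {} {k}"
| "active_inst Ref [({#Sub a a#}, {#})] ({#}, {#}) {} {}"
| "active_inst Tr [({#Sub c a, Sub c b, Sub b a#}, {#})] ({#Sub c b, Sub b a#}, {#}) {} {}"
| "active_inst LSub [({#Mem x a, Sub a b, Mem x b#}, {#})] ({#Mem x a, Sub a b#}, {#}) {} {}"
| "active_inst RuleN [({#InN (NL k) x#}, {#})] ({#}, {#}) {} {k}"
| "y \<notin> nb_worlds a \<Longrightarrow> y \<noteq> x \<Longrightarrow>
   active_inst Rule0 [({#Mem y a, InN a x#}, {#})] ({#InN a x#}, {#}) {y} {}"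
| "active_inst RuleT [({#Mem x (NL k), InN (NL k) x#}, {#})] ({#}, {#}) {} {k}"
| "active_inst RuleW [({#Mem x a, InN a x#}, {#})] ({#InN a x#}, {#}) {} {}"
| "active_inst Single [({#Mem x (Sing x), InN (Sing x) x#}, {#})] ({#InN (Sing x) x#}, {#}) {} {}"
| "active_inst RuleC [({#InN (Sing x) x, Sub (Sing x) a, InN a x#}, {#})] ({#InN a x#}, {#}) {} {}"
| "active_inst Repl1 [({#Mem y (Sing x), atx s x, atx s y#}, {#})]
     ({#Mem y (Sing x), atx s x#}, {#}) {} {}"
| "active_inst Repl2 [({#Mem y (Sing x), atx s x, atx s y#}, {#})]
     ({#Mem y (Sing x), atx s y#}, {#}) {} {}"
| "contr ps [InN a x, Mem y a, InN b y, Mem z b] \<Longrightarrow> k \<notin> seq_nvars (mset ps, {#}) \<Longrightarrow>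
   active_inst U1 [({#Mem z (NL k), InN (NL k) x#} + mset ps, {#})] (mset ps, {#}) {} {k}"
| "contr ps [InN a x, Mem y a, InN b x, Mem z b] \<Longrightarrow> k \<notin> seq_nvars (mset ps, {#}) \<Longrightarrow>
   active_inst U2 [({#Mem z (NL k), InN (NL k) y#} + mset ps, {#})] (mset ps, {#}) {} {k}"
| "contr ps [InN a x, Mem y a, InN b x] \<Longrightarrow>
   active_inst A1 [({#InN b y#} + mset ps, {#})] (mset ps, {#}) {} {}"
| "active_inst A2 [({#InN b x, InN a x, Mem y a, InN b y#}, {#})]
     ({#InN a x, Mem y a, InN b y#}, {#}) {} {}"

lemma rinst_decompose:
  assumes "rinst R ps S"
  obtains Ps C Ew Ev G D where "active_inst R Ps C Ew Ev" and "S = C + (G, D)"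
    and "ps = map (\<lambda>P. P + (G, D)) Ps"
    and "Ew \<inter> seq_worlds (G, D) = {}" and "Ev \<inter> seq_nvars (G, D) = {}"
  using assms by cases (fastforce intro: active_inst.intros)+

lemma rinst_compose:
  assumes "active_inst R Ps C Ew Ev" and "Ew \<inter> seq_worlds W = {}" and "Ev \<inter> seq_nvars W = {}"
  shows "rinst R (map (\<lambda>P. P + W) Ps) (C + W)"
  using assms by (cases W) (auto elim!: active_inst.cases intro!: rinst.intros[simplified])

lemma active_inst_eigen:
  assumes "active_inst R Ps C Ew Ev"
  shows "Ew \<subseteq> (\<Union>P\<in>set Ps. seq_worlds P) - seq_worlds C"
    and "Ev \<subseteq> (\<Union>P\<in>set Ps. seq_nvars P) - seq_nvars C"
  using assms by (cases; auto)+

lemma active_inst_rename: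
  assumes "active_inst R Ps C Ew Ev" and "inj f" and "inj g"
  shows "active_inst R (map (rename_seq f g) Ps) (rename_seq f g C) (f ` Ew) (g ` Ev)"
proof -
  note simps = rename_seq_def inj_eq[OF assms(2)] inj_eq[OF assms(3)] inj_image_mem_iff[OF assms(3)]
  from assms(1) show ?thesis
  proof cases
    case (26 ps a x y b z k)
    then show ?thesis
      using active_inst.intros(26)[OF contr_map[OF 26(6), of "rename_lf f g", simplified], of "g k"]
      by (auto simp: simps)
  next
    case (27 ps a x y b z k)
    then show ?thesis
      using active_inst.intros(27)[OF contr_map[OF 27(6), of "rename_lf f g", simplified], of "g k"]
      by (auto simp: simps)
  next
    case (28 ps a x y b)
    then show ?thesis
      using active_inst.intros(28)[OF contr_map[OF 28(6), of "rename_lf f g", simplified]]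
      by (auto simp: simps)
  qed (auto simp: simps intro!: active_inst.intros[simplified])
qed

lemma rinst_rename:
  assumes "rinst R ps S" and "inj f" and "inj g"
  shows "rinst R (map (rename_seq f g) ps) (rename_seq f g S)"
proof -
  obtain Ps C Ew Ev W where act: "active_inst R Ps C Ew Ev" and S: "S = C + W"
    and ps: "ps = map (\<lambda>P. P + W) Ps"
    and fresh: "Ew \<inter> seq_worlds W = {}" "Ev \<inter> seq_nvars W = {}"
    by (rule rinst_decompose[OF assms(1)]) blast
  have "f ` Ew \<inter> seq_worlds (rename_seq f g W) = {}" "g ` Ev \<inter> seq_nvars (rename_seq f g W) = {}"
    using fresh assms(2,3) by (simp_all flip: image_Int)
  from rinst_compose[OF active_inst_rename[OF act assms(2,3)] this] show ?thesis
    by (simp add: S ps comp_def)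
qed

lemma fresh_renaming:
  fixes K A :: "nat set"
  assumes "finite K" and "finite A"
  obtains f where "inj f" and "\<forall>x\<in>K. f x = x" and "f ` (- K) \<inter> A = {}"
    and "range f \<subseteq> K \<union> - A"
proof -
  obtain M where M: "\<forall>x\<in>K \<union> A. x < M"
    using assms by (metis finite_UnI finite_nat_set_iff_bounded)
  let ?f = "\<lambda>x. if x \<in> K then x else x + M"
  have "inj ?f"
    using M by (auto simp: inj_def)
  with M show ?thesis
    by (intro that) (auto split: if_splits)
qed

lemma active_inst_rename_apart:
  assumes act: "active_inst R Ps C Ew Ev"
    and fresh: "Ew \<inter> seq_worlds V = {}" "Ev \<inter> seq_nvars V = {}"
  obtains f g where "inj f" and "inj g"
    and "\<forall>x\<in>seq_worlds (C + V). f x = x" and "\<forall>k\<in>seq_nvars (C + V). g k = k"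
    and "range f \<subseteq> seq_worlds (C + V) \<union> - seq_worlds V'"
    and "range g \<subseteq> seq_nvars (C + V) \<union> - seq_nvars V'"
    and "rinst R (map (\<lambda>P. rename_seq f g P + V') Ps) (C + V')"
proof -
  obtain f where f: "inj f" "\<forall>x\<in>seq_worlds (C + V). f x = x"
    "f ` (- seq_worlds (C + V)) \<inter> seq_worlds V' = {}"
    "range f \<subseteq> seq_worlds (C + V) \<union> - seq_worlds V'"
    by (rule fresh_renaming[OF finite_seq_worlds finite_seq_worlds]) blast
  obtain g where g: "inj g" "\<forall>k\<in>seq_nvars (C + V). g k = k"
    "g ` (- seq_nvars (C + V)) \<inter> seq_nvars V' = {}"
    "range g \<subseteq> seq_nvars (C + V) \<union> - seq_nvars V'"
    by (rule fresh_renaming[OF finite_seq_nvars finite_seq_nvars]) blast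
  have "rename_seq f g C = C"
    using f(2) g(2) by (intro rename_seq_ident) auto
  then have act': "active_inst R (map (rename_seq f g) Ps) C (f ` Ew) (g ` Ev)"
    using active_inst_rename[OF act f(1) g(1)] by simp
  have "Ew \<subseteq> - seq_worlds (C + V)" and "Ev \<subseteq> - seq_nvars (C + V)"
    using active_inst_eigen[OF act] fresh by auto
  with f(3) g(3) have "f ` Ew \<inter> seq_worlds V' = {}" and "g ` Ev \<inter> seq_nvars V' = {}"
    by blast+
  from rinst_compose[OF act' this] f g show ?thesis
    by (intro that) (auto simp: comp_def)
qed

section \<open>Height-preserving relabelling and weakening\<close>

lemma initial_iff:
  "initial S \<longleftrightarrow> (\<exists>x p. Lab x (Atom p) \<in># fst S \<and> Lab x (Atom p) \<in># snd S) \<or> (\<exists>x. Lab x Bot \<in># fst S)"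
  (is "_ \<longleftrightarrow> ?rhs")
proof
  assume "initial S"
  then show "?rhs" by cases auto
next
  assume "?rhs"
  then show "initial S"
    by (cases S) (auto simp: initial.simps dest!: multi_member_split)
qed

lemma initial_rename: "initial S \<Longrightarrow> initial (rename_seq f g S)"
  by (force simp: initial_iff rename_seq_def)

lemma derivable_rename:
  "derivable L n S \<Longrightarrow> inj f \<Longrightarrow> inj g \<Longrightarrow> derivable L n (rename_seq f g S)"
proof (induction rule: derivable.induct)
  case (init S L n)
  then show ?case by (simp add: derivable.init initial_rename)
next
  case (step R L ps S n)
  then show ?case
    using derivable.step[OF step(1) rinst_rename[OF step(2)]] by simp
qed

lemma derivable_mono: "derivable L n S \<Longrightarrow> n \<le> m \<Longrightarrow> derivable L m S"
proof (induction arbitrary: m rule: derivable.induct)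
  case (init S L n)
  then show ?case by (simp add: derivable.init)
next
  case (step R L ps S n)
  then obtain m' where "m = Suc m'" and "n \<le> m'"
    by (cases m) auto
  with step show ?case by (auto intro: derivable.step)
qed

lemma initial_add: "initial S \<Longrightarrow> initial (S + W)"
  by (auto simp: initial_iff)

lemma derivable_add: "derivable L n S \<Longrightarrow> derivable L n (S + W)"
proof (induction n arbitrary: S)
  case 0
  then show ?case
    by cases (simp add: derivable.init initial_add)
next
  case (Suc n)
  from Suc.prems show ?case
  proof cases
    case init
    then show ?thesis by (simp add: derivable.init initial_add)
  next
    case (step R ps)
    obtain Ps C Ew Ev V where act: "active_inst R Ps C Ew Ev" and S: "S = C + V"
      and ps: "ps = map (\<lambda>P. P + V) Ps"
      and fresh: "Ew \<inter> seq_worlds V = {}" "Ev \<inter> seq_nvars V = {}"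
      by (rule rinst_decompose[OF step(2)]) blast
    obtain f g where f: "inj f" "\<forall>x\<in>seq_worlds (C + V). f x = x"
      and g: "inj g" "\<forall>k\<in>seq_nvars (C + V). g k = k"
      and rule: "rinst R (map (\<lambda>P. rename_seq f g P + (V + W)) Ps) (C + (V + W))"
      by (rule active_inst_rename_apart[OF act fresh, of "V + W"]) blast
    have "derivable L n (rename_seq f g P + (V + W))" if "P \<in> set Ps" for P
    proof -
      have "derivable L n (P + V)"
        using step(3) that by (simp add: ps)
      then have "derivable L n (rename_seq f g (P + V))"
        using f(1) g(1) by (rule derivable_rename)
      moreover have "rename_seq f g V = V"
        using f(2) g(2) by (intro rename_seq_ident) auto
      ultimately show ?thesis
        using Suc.IH[of "rename_seq f g P + V"] by (simp add: add.assoc)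
    qed
    then have "\<forall>P'\<in>set (map (\<lambda>P. rename_seq f g P + (V + W)) Ps). derivable L n P'"
      by auto
    from derivable.step[OF step(1) rule this] show ?thesis
      by (simp add: S add.assoc)
  qed
qed

lemma derivable_subseteq:
  assumes "derivable L n S" and "fst S \<subseteq># fst P" and "snd S \<subseteq># snd P"
  shows "derivable L n P"
proof -
  have "S + (P - S) = P"
    using assms(2,3) by (simp add: prod_eq_iff)
  with derivable_add[OF assms(1), of "P - S"] show ?thesis by simp
qed

section \<open>Inversion of the logical rules\<close>

definition on_side :: "bool \<Rightarrow> 'p lf \<Rightarrow> 'p seq" where
  "on_side b p = (if b then ({#p#}, {#}) else ({#}, {#p#}))"

lemma seq_worlds_on_side [simp]: "seq_worlds (on_side b p) = lf_worlds p"
  by (simp add: on_side_def)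

lemma seq_nvars_on_side [simp]: "seq_nvars (on_side b p) = lf_nvars p"
  by (simp add: on_side_def)

(* logical_inverse b p Psi: Psi is what a logical rule with principal formula p (in the antecedent
   iff b) puts into one of its premisses; eigenlabels of Psi may be chosen freely. *)
inductive logical_inverse :: "bool \<Rightarrow> 'p lf \<Rightarrow> 'p seq \<Rightarrow> bool" where
  LAnd: "logical_inverse True (Lab x (And A B)) ({#Lab x A, Lab x B#}, {#})"
| LOr1: "logical_inverse True (Lab x (Or A B)) ({#Lab x A#}, {#})"
| LOr2: "logical_inverse True (Lab x (Or A B)) ({#Lab x B#}, {#})"
| LImp1: "logical_inverse True (Lab x (Imp A B)) ({#}, {#Lab x A#})"
| LImp2: "logical_inverse True (Lab x (Imp A B)) ({#Lab x B#}, {#})"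
| LEx: "x \<notin> nb_worlds a \<Longrightarrow> logical_inverse True (Ex a A) ({#Mem x a, Lab x A#}, {#})"
| LBar: "k \<notin> nb_vars a \<Longrightarrow>
    logical_inverse True (Cnd x a A B)
      ({#InN (NL k) x, Sub (NL k) a, Ex (NL k) A, All (NL k) (Imp A B)#}, {#})"
| RAnd1: "logical_inverse False (Lab x (And A B)) ({#}, {#Lab x A#})"
| RAnd2: "logical_inverse False (Lab x (And A B)) ({#}, {#Lab x B#})"
| ROr: "logical_inverse False (Lab x (Or A B)) ({#}, {#Lab x A, Lab x B#})"
| RImp: "logical_inverse False (Lab x (Imp A B)) ({#Lab x A#}, {#Lab x B#})"
| RAll: "x \<notin> nb_worlds a \<Longrightarrow> logical_inverse False (All a A) ({#Mem x a#}, {#Lab x A#})"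
| RCond: "logical_inverse False (Lab x (Cond A B))
    ({#InN (NL k) x, Ex (NL k) A#}, {#Cnd x (NL k) A B#})"

lemma initial_logical_inverse:
  "initial (S + on_side b p) \<Longrightarrow> logical_inverse b p Psi \<Longrightarrow> initial (S + Psi)"
  by (auto simp: initial_iff on_side_def elim!: logical_inverse.cases)

lemma add_mset_eq_union:
  assumes "add_mset p M = A + B"
  shows "(\<exists>B'. B = add_mset p B' \<and> M = A + B') \<or> (\<exists>A'. A = add_mset p A' \<and> M = A' + B)"
proof (cases "p \<in># A")
  case True
  then obtain A' where "A = add_mset p A'"
    by (blast dest: multi_member_split)
  with assms show ?thesis by auto
next
  case False
  with union_single_eq_member[OF assms] obtain B' where "B = add_mset p B'"
    by (auto dest: multi_member_split)
  with assms show ?thesis by auto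
qed

lemma on_side_split:
  assumes "S + on_side b p = C + W"
  shows "(\<exists>W'. W = W' + on_side b p \<and> S = C + W') \<or> (\<exists>C'. C = C' + on_side b p \<and> S = C' + W)"
proof (cases b)
  case True
  with assms have "add_mset p (fst S) = fst C + fst W" and "snd S = snd C + snd W"
    by (auto simp: on_side_def prod_eq_iff)
  with add_mset_eq_union[OF this(1)] True show ?thesis
    by (auto simp: on_side_def prod_eq_iff intro: exI[of _ "(_, snd W)"] exI[of _ "(_, snd C)"])
next
  case False
  with assms have "add_mset p (snd S) = snd C + snd W" and "fst S = fst C + fst W"
    by (auto simp: on_side_def prod_eq_iff)
  with add_mset_eq_union[OF this(1)] False show ?thesis
    by (auto simp: on_side_def prod_eq_iff intro: exI[of _ "(fst W, _)"] exI[of _ "(fst C, _)"])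
qed

lemma atx_eq_iff [simp]:
  "atx s x = Lab y A \<longleftrightarrow> (\<exists>p. s = AtP p \<and> A = Atom p \<and> y = x)"
  "atx s x \<noteq> Ex a A" "atx s x \<noteq> All a A" "atx s x \<noteq> Cnd y a A B"
  by (cases s; auto)+

lemma contr_set: "contr ps l \<Longrightarrow> p \<in> set ps \<Longrightarrow> p \<in> set l"
  by (simp add: contr_def)

lemma mset_eq_add_msetD: "mset ps = add_mset a M \<Longrightarrow> a \<in> set ps"
  by (metis set_mset_mset union_single_eq_member)

lemma active_inst_principal_premiss:
  assumes "active_inst R Ps C Ew Ev" and "C = C' + on_side b p" and "logical_inverse b p Psi"
    and "seq_worlds Psi \<subseteq> lf_worlds p" and "seq_nvars Psi \<subseteq> lf_nvars p"
  shows "C' + Psi \<in> set Ps"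
  using assms
  by (cases C') (elim active_inst.cases logical_inverse.cases,
      auto simp: on_side_def add_eq_conv_ex dest!: mset_eq_add_msetD dest: contr_set)

lemma active_inst_principal_renamed:
  assumes act: "active_inst R Ps C Ew Ev" and inv: "logical_inverse b p Psi"
    and C: "C = C' + on_side b p"
  obtains Pc f g where "Pc \<in> set Ps" and "inj f" and "inj g"
    and "\<forall>x. x \<notin> Ew \<union> (seq_worlds Psi - lf_worlds p) \<longrightarrow> f x = x"
    and "\<forall>k. k \<notin> Ev \<union> (seq_nvars Psi - lf_nvars p) \<longrightarrow> g k = k"
    and "rename_seq f g Pc = C' + Psi"
proof (cases "seq_worlds Psi \<subseteq> lf_worlds p \<and> seq_nvars Psi \<subseteq> lf_nvars p")
  case True
  then show ?thesis
    using active_inst_principal_premiss[OF act C inv]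
    by (intro that[of "C' + Psi" id id]) auto
next
  case False
  note shape = on_side_def prod_eq_iff add_eq_conv_ex
  from inv False show ?thesis
  proof cases
    case (LEx x a A)
    from act obtain x' where "Ps = [({#Mem x' a, Lab x' A#}, {#})]" "C' = 0" "Ew = {x'}"
      "x' \<notin> nb_worlds a"
      using C unfolding LEx
      by cases (auto simp: shape dest!: mset_eq_add_msetD dest: contr_set)
    moreover have "rename_nbh (transpose x' x) id a = a"
      using calculation LEx by (cases a) auto
    ultimately show ?thesis
      using LEx by (intro that[of _ "transpose x' x" id]) (auto simp: rename_seq_def transpose_def)
  next
    case (LBar k a x A B)
    from act obtain k' where "C' = 0" "Ev = {k'}" "k' \<notin> nb_vars a"
      "Ps = [({#InN (NL k') x, Sub (NL k') a, Ex (NL k') A, All (NL k') (Imp A B)#}, {#})]"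
      using C unfolding LBar
      by cases (auto simp: shape dest!: mset_eq_add_msetD dest: contr_set)
    moreover have "rename_nbh id (transpose k' k) a = a"
      using calculation LBar by (cases a) auto
    ultimately show ?thesis
      using LBar by (intro that[of _ id "transpose k' k"]) (auto simp: rename_seq_def transpose_def)
  next
    case (RAll x a A)
    from act obtain x' where "Ps = [({#Mem x' a#}, {#Lab x' A#})]" "C' = 0" "Ew = {x'}"
      "x' \<notin> nb_worlds a"
      using C unfolding RAll
      by cases (auto simp: shape dest!: mset_eq_add_msetD dest: contr_set)
    moreover have "rename_nbh (transpose x' x) id a = a"
      using calculation RAll by (cases a) auto
    ultimately show ?thesis
      using RAll by (intro that[of _ "transpose x' x" id]) (auto simp: rename_seq_def transpose_def)
  next
    case (RCond x A B k)
    from act obtain k' where "Ps = [({#InN (NL k') x, Ex (NL k') A#}, {#Cnd x (NL k') A B#})]"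
      "C' = 0" "Ev = {k'}"
      using C unfolding RCond
      by cases (auto simp: shape dest!: mset_eq_add_msetD dest: contr_set)
    then show ?thesis
      using RCond by (intro that[of _ id "transpose k' k"]) (auto simp: rename_seq_def transpose_def)
  qed auto
qed

lemma rinst_side_formula_cases:
  assumes "rinst R ps (S + on_side b p)"
  obtains (nonprincipal) Ps C Ew Ev W where "active_inst R Ps C Ew Ev" and "S = C + W"
      and "ps = map (\<lambda>P. P + (W + on_side b p)) Ps"
      and "Ew \<inter> seq_worlds (W + on_side b p) = {}" and "Ev \<inter> seq_nvars (W + on_side b p) = {}"
  | (principal) Ps C' Ew Ev W where "active_inst R Ps (C' + on_side b p) Ew Ev" and "S = C' + W"
      and "ps = map (\<lambda>P. P + W) Ps"
      and "Ew \<inter> seq_worlds W = {}" and "Ev \<inter> seq_nvars W = {}"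
proof -
  obtain Ps C Ew Ev V where act: "active_inst R Ps C Ew Ev" and split: "S + on_side b p = C + V"
    and ps: "ps = map (\<lambda>P. P + V) Ps"
    and fresh: "Ew \<inter> seq_worlds V = {}" "Ev \<inter> seq_nvars V = {}"
    by (rule rinst_decompose[OF assms]) blast
  from on_side_split[OF split] show ?thesis
  proof (elim disjE exE conjE)
    fix W
    assume "V = W + on_side b p" and "S = C + W"
    with act ps fresh show ?thesis
      by (intro nonprincipal) auto
  next
    fix C'
    assume "C = C' + on_side b p" and "S = C' + V"
    with act ps fresh show ?thesis
      by (intro principal) auto
  qed
qed

lemma derivable_inverse_principal:
  assumes act: "active_inst R Ps (C' + on_side b p) Ew Ev"
    and fresh: "Ew \<inter> seq_worlds W = {}" "Ev \<inter> seq_nvars W = {}"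
    and prems: "\<forall>P\<in>set Ps. derivable L n (P + W)"
    and inv: "logical_inverse b p Psi"
    and new: "(seq_worlds Psi - lf_worlds p) \<inter> seq_worlds W = {}"
      "(seq_nvars Psi - lf_nvars p) \<inter> seq_nvars W = {}"
  shows "derivable L n (C' + W + Psi)"
proof -
  obtain Pc f g where Pc: "Pc \<in> set Ps" and fg: "inj f" "inj g"
    and fixed: "\<forall>x. x \<notin> Ew \<union> (seq_worlds Psi - lf_worlds p) \<longrightarrow> f x = x"
      "\<forall>k. k \<notin> Ev \<union> (seq_nvars Psi - lf_nvars p) \<longrightarrow> g k = k"
    and renamed: "rename_seq f g Pc = C' + Psi"
    by (rule active_inst_principal_renamed[OF act inv refl]) blast
  have "rename_seq f g W = W"
    using fixed fresh new by (intro rename_seq_ident) auto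
  moreover have "derivable L n (rename_seq f g (Pc + W))"
    using prems Pc fg by (blast intro: derivable_rename)
  ultimately show ?thesis
    using renamed by (simp add: ac_simps)
qed

lemma derivable_inverse_nonprincipal:
  assumes act: "active_inst R Ps C Ew Ev" and R: "R \<in> rules L"
    and fresh: "Ew \<inter> seq_worlds (W + on_side b p) = {}" "Ev \<inter> seq_nvars (W + on_side b p) = {}"
    and prems: "\<forall>P\<in>set Ps. derivable L n (P + (W + on_side b p))"
    and new: "(seq_worlds Psi - lf_worlds p) \<inter> seq_worlds (C + W) = {}"
      "(seq_nvars Psi - lf_nvars p) \<inter> seq_nvars (C + W) = {}"
    and IH: "\<And>S. derivable L n (S + on_side b p) \<Longrightarrow>
      (seq_worlds Psi - lf_worlds p) \<inter> seq_worlds S = {} \<Longrightarrow>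
      (seq_nvars Psi - lf_nvars p) \<inter> seq_nvars S = {} \<Longrightarrow> derivable L n (S + Psi)"
  shows "derivable L (Suc n) (C + W + Psi)"
proof -
  obtain f g where f: "inj f" "\<forall>x\<in>seq_worlds (C + (W + on_side b p)). f x = x"
      "range f \<subseteq> seq_worlds (C + (W + on_side b p)) \<union> - seq_worlds (W + Psi)"
    and g: "inj g" "\<forall>k\<in>seq_nvars (C + (W + on_side b p)). g k = k"
      "range g \<subseteq> seq_nvars (C + (W + on_side b p)) \<union> - seq_nvars (W + Psi)"
    and rule: "rinst R (map (\<lambda>P. rename_seq f g P + (W + Psi)) Ps) (C + (W + Psi))"
    by (rule active_inst_rename_apart[OF act fresh, of "W + Psi"]) blast
  have "derivable L n (rename_seq f g P + W + Psi)" if "P \<in> set Ps" for P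
  proof (rule IH)
    have "derivable L n (rename_seq f g (P + (W + on_side b p)))"
      using prems that f(1) g(1) by (blast intro: derivable_rename)
    moreover have "rename_seq f g (W + on_side b p) = W + on_side b p"
      using f(2) g(2) by (intro rename_seq_ident) auto
    ultimately show "derivable L n (rename_seq f g P + W + on_side b p)"
      by (simp add: add.assoc)
    show "(seq_worlds Psi - lf_worlds p) \<inter> seq_worlds (rename_seq f g P + W) = {}"
      using f(2,3) new(1) by simp blast
    show "(seq_nvars Psi - lf_nvars p) \<inter> seq_nvars (rename_seq f g P + W) = {}"
      using g(2,3) new(2) by simp blast
  qed
  then have "\<forall>P'\<in>set (map (\<lambda>P. rename_seq f g P + (W + Psi)) Ps). derivable L n P'"
    by (auto simp: add.assoc)
  from derivable.step[OF R rule this] show ?thesis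
    by (simp add: add.assoc)
qed

lemma derivable_logical_inverse:
  assumes "derivable L n (S + on_side b p)" and inv: "logical_inverse b p Psi"
    and "(seq_worlds Psi - lf_worlds p) \<inter> seq_worlds S = {}"
    and "(seq_nvars Psi - lf_nvars p) \<inter> seq_nvars S = {}"
  shows "derivable L n (S + Psi)"
  using assms(1,3,4)
proof (induction n arbitrary: S)
  case 0
  then show ?case
    by cases (auto intro: derivable.init initial_logical_inverse[OF _ inv])
next
  case (Suc n)
  from Suc.prems(1) show ?case
  proof cases
    case init
    then show ?thesis
      by (auto intro: derivable.init initial_logical_inverse[OF _ inv])
  next
    case (step R ps)
    from step(2) show ?thesis
    proof (cases rule: rinst_side_formula_cases)
      case (nonprincipal Ps C Ew Ev W)
      have prems: "\<forall>P\<in>set Ps. derivable L n (P + (W + on_side b p))"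
        using step(3) by (simp add: nonprincipal(3))
      have new: "(seq_worlds Psi - lf_worlds p) \<inter> seq_worlds (C + W) = {}"
        "(seq_nvars Psi - lf_nvars p) \<inter> seq_nvars (C + W) = {}"
        using Suc.prems(2,3) by (simp_all only: nonprincipal(2))
      from derivable_inverse_nonprincipal[OF nonprincipal(1) step(1) nonprincipal(4,5) prems new]
      have "derivable L (Suc n) (C + W + Psi)"
        using Suc.IH by blast
      then show ?thesis
        by (simp only: nonprincipal(2))
    next
      case (principal Ps C' Ew Ev W)
      have prems: "\<forall>P\<in>set Ps. derivable L n (P + W)"
        using step(3) by (simp add: principal(3))
      have new: "(seq_worlds Psi - lf_worlds p) \<inter> seq_worlds W = {}"
        "(seq_nvars Psi - lf_nvars p) \<inter> seq_nvars W = {}"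
        using Suc.prems(2,3) by (auto simp: principal(2))
      from derivable_inverse_principal[OF principal(1,4,5) prems inv new]
      have "derivable L n (S + Psi)"
        by (simp only: principal(2))
      then show ?thesis
        by (rule derivable_mono) simp
    qed
  qed
qed

section \<open>Invertibility of all rules\<close>

lemma rinst_premiss_cases:
  assumes "rinst R ps S" and "P \<in> set ps"
  obtains (weakening) "fst S \<subseteq># fst P" and "snd S \<subseteq># snd P"
  | (inversion) b p Psi S0 where "logical_inverse b p Psi"
    and "S = S0 + on_side b p" and "P = S0 + Psi"
    and "(seq_worlds Psi - lf_worlds p) \<inter> seq_worlds S0 = {}"
    and "(seq_nvars Psi - lf_nvars p) \<inter> seq_nvars S0 = {}"
proof -
  note simps = on_side_def logical_inverse.simps add_mset_commute
  from assms(1) show ?thesis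
  proof cases
    \<comment> \<open>cases 1-6, 8, 9, 11, 14 are LAnd, RAnd, LOr, ROr, LImp, RImp, RAll, LEx, RCond, LBar\<close>
    case (1 x A B G D)
    with assms(2) show ?thesis
      by (intro inversion[of True "Lab x (And A B)" "P - (G, D)" "(G, D)"]) (auto simp: simps)
  next
    case (2 G D x A B)
    with assms(2) show ?thesis
      by (intro inversion[of False "Lab x (And A B)" "P - (G, D)" "(G, D)"]) (auto simp: simps)
  next
    case (3 x A G D B)
    with assms(2) show ?thesis
      by (intro inversion[of True "Lab x (Or A B)" "P - (G, D)" "(G, D)"]) (auto simp: simps)
  next
    case (4 G D x A B)
    with assms(2) show ?thesis
      by (intro inversion[of False "Lab x (Or A B)" "P - (G, D)" "(G, D)"]) (auto simp: simps)
  next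
    case (5 G D x A B)
    with assms(2) show ?thesis
      by (intro inversion[of True "Lab x (Imp A B)" "P - (G, D)" "(G, D)"]) (auto simp: simps)
  next
    case (6 x A G D B)
    with assms(2) show ?thesis
      by (intro inversion[of False "Lab x (Imp A B)" "P - (G, D)" "(G, D)"]) (auto simp: simps)
  next
    case (8 x G D a A)
    with assms(2) show ?thesis
      by (intro inversion[of False "All a A" "P - (G, D)" "(G, D)"]) (auto simp: simps)
  next
    case (9 x a A G D)
    with assms(2) show ?thesis
      by (intro inversion[of True "Ex a A" "P - (G, D)" "(G, D)"]) (auto simp: simps)
  next
    case (11 k G D x A B)
    with assms(2) show ?thesis
      by (intro inversion[of False "Lab x (Cond A B)" "P - (G, D)" "(G, D)"]) (auto simp: simps)
  next
    case (14 k x a A B G D)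
    with assms(2) show ?thesis
      by (intro inversion[of True "Cnd x a A B" "P - (G, D)" "(G, D)"]) (auto simp: simps)
  qed (use assms(2) in \<open>auto intro: weakening\<close>)
qed

theorem mainTheorem11:
  fixes L :: calc and R :: rname and ps :: "'p seq list" and S :: "'p seq" and n :: nat
  assumes "R \<in> rules L"
    and "rinst R ps S"
    and "wf_seq S"
    and "derivable L n S"
  shows "\<forall>P\<in>set ps. derivable L n P"
proof
  fix P
  assume "P \<in> set ps"
  with assms(2) show "derivable L n P"
  proof (cases rule: rinst_premiss_cases)
    case weakening
    with assms(4) show ?thesis
      by (rule derivable_subseteq)
  next
    case (inversion b p Psi S0)
    with assms(4) show ?thesis
      using derivable_logical_inverse[of L n S0 b p Psi] by simp
  qed
qed

end
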